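(* Assume Hypothesis C. Let $\hat s\in S$ be a multi-state, $L$ a labeling, and $\pi$ the priority rule keyed to $L$. Then the Evaluator (for $\hat s$, $L$, $\pi$) terminates with $V=V^{\pi}(\hat s)$.
   Context: There are $K$ bandits with pairwise disjoint finite nonempty state sets $N_1,\dots,N_K$; $N=N_1\cup\dots\cup N_K$; $b(j)$ is the $k$ with $j\in N_k$. Bandit $k$ has real transition rates $q(i,j)$ ($i,j\in N_k$) forming $q^k$ and real rewards $r(i)$ forming $r^k$. A multi-state $s$ contains exactly one state $s_k$ of each $N_k$; $S$ is the set of multi-states; $s_{\setminus k}=s\setminus\{s_k\}$. For a map $\delta:S\to\{1,\dots,K\}$ (stationary nonrandomized policy): $Q^{\delta}(s,t)=q(s_{\delta(s)},j)$ if $t=s_{\setminus\delta(s)}\cup\{j\}$ with $j\in N_{\delta(s)}$, else $0$; $R^{\delta}(s)=r(s_{\delta(s)})$; $V^{\delta}=(I-Q^{\delta})^{-1}R^{\delta}$. A matrix is transient if its powers tend to $0$ entrywise. Hypothesis C: each $q^k$ is entrywise nonnegative and transient, and at least one of: (RN) each $q^k$ is substochastic; (RA) $r(i)\le0$ for all $i\in N$; (RS) $r(i)\ge0$ for all $i\in N$. A labeling is an injective $L:N\cup\{0\}\to\{1,\dots,|N|+1\}$ with $L(0)=|N|+1$; the priority rule keyed to $L$ is $\pi(s)=\arg\min_k L(s_k)$. Finalized data: for each bandit $k$, start with the tableau $[(I-q^k),r^k]$ and $M=N_k$, writing the current tableau as $[(I-q),r]$; while $M\ne\emptyset$, let $i\in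 M$ minimize $L(i)$, multiply row $i$ by $1/[1-q(i,i)]$, for each $j\in M\setminus\{i\}$ add $q(j,i)$ (current value) times the updated row $i$ to row $j$, and remove $i$ from $M$. The final tableau $[(I-\tilde q^k),\tilde r^k]$ gives the finalized data $\tilde q(i,j),\tilde r(i)$. Evaluator: For each bandit $p$ define the vector $y^p\in\mathbb R^{N_p}$ by $y^p(j)=1$ if $j=\hat s_p$ and $y^p(j)=0$ otherwise. Set $V=0$. For $n=1,2,\dots,|N|$: let $i$ be the state with $L(i)=n$ and $k=b(i)$; replace $V$ by $V+\tilde r(i)\,y^k(i)\prod_{p\ne k}\big[\sum_{j\in N_p}y^p(j)\big]$; then for each $j\in N_k\setminus\{i\}$ replace $y^k(j)$ by $y^k(j)+y^k(i)\tilde q(i,j)$, and then set $y^k(i)=0$ (no other $y^p$ changes). *)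

theory Defs
  imports Complex_Main
begin

definition idm :: "'b \<Rightarrow> 'b \<Rightarrow> real" where
  "idm s t = (if s = t then 1 else 0)"

definition mmult :: "'b set \<Rightarrow> ('b \<Rightarrow> 'b \<Rightarrow> real) \<Rightarrow> ('b \<Rightarrow> 'b \<Rightarrow> real) \<Rightarrow> 'b \<Rightarrow> 'b \<Rightarrow> real" where
  "mmult X A B s t = (\<Sum>u\<in>X. A s u * B u t)"

fun mpow :: "'b set \<Rightarrow> ('b \<Rightarrow> 'b \<Rightarrow> real) \<Rightarrow> nat \<Rightarrow> 'b \<Rightarrow> 'b \<Rightarrow> real" where
  "mpow X A 0 = idm"
| "mpow X A (Suc n) = mmult X (mpow X A n) A"

definition transient :: "'b set \<Rightarrow> ('b \<Rightarrow> 'b \<Rightarrow> real) \<Rightarrow> bool" where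
  "transient X A = (\<forall>i\<in>X. \<forall>j\<in>X. (\<lambda>n. mpow X A n i j) \<longlonglongrightarrow> 0)"

definition substochastic :: "'b set \<Rightarrow> ('b \<Rightarrow> 'b \<Rightarrow> real) \<Rightarrow> bool" where
  "substochastic X A = ((\<forall>i\<in>X. \<forall>j\<in>X. 0 \<le> A i j) \<and> (\<forall>i\<in>X. (\<Sum>j\<in>X. A i j) \<le> 1))"

definition is_minverse :: "'b set \<Rightarrow> ('b \<Rightarrow> 'b \<Rightarrow> real) \<Rightarrow> ('b \<Rightarrow> 'b \<Rightarrow> real) \<Rightarrow> bool" where
  "is_minverse X A B = (\<forall>s\<in>X. \<forall>t\<in>X. mmult X A B s t = idm s t \<and> mmult X B A s t = idm s t)"

definition minvertible :: "'b set \<Rightarrow> ('b \<Rightarrow> 'b \<Rightarrow> real) \<Rightarrow> bool" where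
  "minvertible X A = (\<exists>B. is_minverse X A B)"

definition minv :: "'b set \<Rightarrow> ('b \<Rightarrow> 'b \<Rightarrow> real) \<Rightarrow> 'b \<Rightarrow> 'b \<Rightarrow> real" where
  "minv X A = (SOME B. is_minverse X A B)"

text \<open>Bandits are indexed by k \<in> {1..K}; N k is the state set of bandit k.\<close>

definition Nall :: "nat \<Rightarrow> (nat \<Rightarrow> 'a set) \<Rightarrow> 'a set" where
  "Nall K N = (\<Union>k\<in>{1..K}. N k)"

definition bidx :: "nat \<Rightarrow> (nat \<Rightarrow> 'a set) \<Rightarrow> 'a \<Rightarrow> nat" where
  "bidx K N j = (THE k. k \<in> {1..K} \<and> j \<in> N k)"

definition comp :: "(nat \<Rightarrow> 'a set) \<Rightarrow> 'a set \<Rightarrow> nat \<Rightarrow> 'a" where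
  "comp N s k = (THE x. x \<in> s \<and> x \<in> N k)"

definition multistates :: "nat \<Rightarrow> (nat \<Rightarrow> 'a set) \<Rightarrow> 'a set set" where
  "multistates K N = {s. s \<subseteq> Nall K N \<and> (\<forall>k\<in>{1..K}. \<exists>!x. x \<in> s \<and> x \<in> N k)}"

definition Qpol :: "(nat \<Rightarrow> 'a set) \<Rightarrow> ('a \<Rightarrow> 'a \<Rightarrow> real) \<Rightarrow> ('a set \<Rightarrow> nat)
    \<Rightarrow> 'a set \<Rightarrow> 'a set \<Rightarrow> real" where
  "Qpol N q \<delta> s t =
    (let k = \<delta> s; i = comp N s k in
     if (\<exists>j\<in>N k. t = insert j (s - {i}))
     then q i (THE j. j \<in> N k \<and> t = insert j (s - {i}))
     else 0)"

definition Rpol :: "(nat \<Rightarrow> 'a set) \<Rightarrow> ('a \<Rightarrow> real) \<Rightarrow> ('a set \<Rightarrow> nat) \<Rightarrow> 'a set \<Rightarrow> real" where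
  "Rpol N r \<delta> s = r (comp N s (\<delta> s))"

definition Vpol :: "nat \<Rightarrow> (nat \<Rightarrow> 'a set) \<Rightarrow> ('a \<Rightarrow> 'a \<Rightarrow> real) \<Rightarrow> ('a \<Rightarrow> real)
    \<Rightarrow> ('a set \<Rightarrow> nat) \<Rightarrow> 'a set \<Rightarrow> real" where
  "Vpol K N q r \<delta> s =
    (\<Sum>t\<in>multistates K N.
       minv (multistates K N) (\<lambda>u v. idm u v - Qpol N q \<delta> u v) s t * Rpol N r \<delta> t)"

definition hypC :: "nat \<Rightarrow> (nat \<Rightarrow> 'a set) \<Rightarrow> ('a \<Rightarrow> 'a \<Rightarrow> real) \<Rightarrow> ('a \<Rightarrow> real) \<Rightarrow> bool" where
  "hypC K N q r =
    ((\<forall>k\<in>{1..K}. (\<forall>i\<in>N k. \<forall>j\<in>N k. 0 \<le> q i j) \<and> transient (N k) q) \<and>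
     ((\<forall>k\<in>{1..K}. substochastic (N k) q) \<or>
      (\<forall>i\<in>Nall K N. r i \<le> 0) \<or>
      (\<forall>i\<in>Nall K N. r i \<ge> 0)))"

text \<open>The extra label argument None plays the role of the state 0.\<close>
definition labeling :: "nat \<Rightarrow> (nat \<Rightarrow> 'a set) \<Rightarrow> ('a option \<Rightarrow> nat) \<Rightarrow> bool" where
  "labeling K N L =
    (inj_on L (insert None (Some ` Nall K N)) \<and>
     L ` (insert None (Some ` Nall K N)) \<subseteq> {1..card (Nall K N) + 1} \<and>
     L None = card (Nall K N) + 1)"

definition priority :: "nat \<Rightarrow> (nat \<Rightarrow> 'a set) \<Rightarrow> ('a option \<Rightarrow> nat) \<Rightarrow> 'a set \<Rightarrow> nat" where
  "priority K N L s = (ARG_MIN (\<lambda>k. L (Some (comp N s k))) k. k \<in> {1..K})"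

text \<open>A tableau [A, c] with A = I - q; the current q is recovered as curq A.\<close>
definition curq :: "('a \<Rightarrow> 'a \<Rightarrow> real) \<Rightarrow> 'a \<Rightarrow> 'a \<Rightarrow> real" where
  "curq A i j = idm i j - A i j"

definition pivot :: "'a set \<Rightarrow> 'a \<Rightarrow> ('a \<Rightarrow> 'a \<Rightarrow> real) \<times> ('a \<Rightarrow> real)
    \<Rightarrow> ('a \<Rightarrow> 'a \<Rightarrow> real) \<times> ('a \<Rightarrow> real)" where
  "pivot M i T =
    (let A = fst T; c = snd T; a = 1 / (1 - curq A i i);
         Ai = (\<lambda>l. a * A i l); ci = a * c i
     in ((\<lambda>j l. if j = i then Ai l
                else if j \<in> M - {i} then A j l + curq A j i * Ai l
                else A j l),
         (\<lambda>j. if j = i then ci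
              else if j \<in> M - {i} then c j + curq A j i * ci
              else c j)))"

text \<open>The while loop; the fuel argument n equals card M at the start, so the loop
  runs exactly until M is empty.\<close>
fun finloop :: "('a option \<Rightarrow> nat) \<Rightarrow> nat \<Rightarrow> 'a set \<Rightarrow> ('a \<Rightarrow> 'a \<Rightarrow> real) \<times> ('a \<Rightarrow> real)
    \<Rightarrow> ('a \<Rightarrow> 'a \<Rightarrow> real) \<times> ('a \<Rightarrow> real)" where
  "finloop L 0 M T = T"
| "finloop L (Suc n) M T =
    (let i = (ARG_MIN (\<lambda>i. L (Some i)) i. i \<in> M) in finloop L n (M - {i}) (pivot M i T))"

definition fin_tab :: "(nat \<Rightarrow> 'a set) \<Rightarrow> ('a \<Rightarrow> 'a \<Rightarrow> real) \<Rightarrow> ('a \<Rightarrow> real)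
    \<Rightarrow> ('a option \<Rightarrow> nat) \<Rightarrow> nat \<Rightarrow> ('a \<Rightarrow> 'a \<Rightarrow> real) \<times> ('a \<Rightarrow> real)" where
  "fin_tab N q r L k = finloop L (card (N k)) (N k) ((\<lambda>i j. idm i j - q i j), r)"

definition qtil :: "nat \<Rightarrow> (nat \<Rightarrow> 'a set) \<Rightarrow> ('a \<Rightarrow> 'a \<Rightarrow> real) \<Rightarrow> ('a \<Rightarrow> real)
    \<Rightarrow> ('a option \<Rightarrow> nat) \<Rightarrow> 'a \<Rightarrow> 'a \<Rightarrow> real" where
  "qtil K N q r L i j = curq (fst (fin_tab N q r L (bidx K N i))) i j"

definition rtil :: "nat \<Rightarrow> (nat \<Rightarrow> 'a set) \<Rightarrow> ('a \<Rightarrow> 'a \<Rightarrow> real) \<Rightarrow> ('a \<Rightarrow> real)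
    \<Rightarrow> ('a option \<Rightarrow> nat) \<Rightarrow> 'a \<Rightarrow> real" where
  "rtil K N q r L i = snd (fin_tab N q r L (bidx K N i)) i"

text \<open>The vectors y^p are stored in one function y on N (the N_p are disjoint).\<close>
definition evstep :: "nat \<Rightarrow> (nat \<Rightarrow> 'a set) \<Rightarrow> ('a \<Rightarrow> 'a \<Rightarrow> real) \<Rightarrow> ('a \<Rightarrow> real)
    \<Rightarrow> ('a option \<Rightarrow> nat) \<Rightarrow> nat \<Rightarrow> real \<times> ('a \<Rightarrow> real) \<Rightarrow> real \<times> ('a \<Rightarrow> real)" where
  "evstep K N qt rt L n st =
    (let V = fst st; y = snd st;
         i = (THE i. i \<in> Nall K N \<and> L (Some i) = n); k = bidx K N i;
         V' = V + rt i * y i * (\<Prod>p\<in>{1..K} - {k}. \<Sum>j\<in>N p. y j);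
         y' = (\<lambda>j. if j \<in> N k - {i} then y j + y i * qt i j
                   else if j = i then 0 else y j)
     in (V', y'))"

definition evaluator :: "nat \<Rightarrow> (nat \<Rightarrow> 'a set) \<Rightarrow> ('a \<Rightarrow> 'a \<Rightarrow> real) \<Rightarrow> ('a \<Rightarrow> real)
    \<Rightarrow> ('a option \<Rightarrow> nat) \<Rightarrow> 'a set \<Rightarrow> real" where
  "evaluator K N q r L shat =
    fst (fold (evstep K N (qtil K N q r L) (rtil K N q r L) L) [1..<card (Nall K N) + 1]
          (0, (\<lambda>j. if j \<in> shat then 1 else 0)))"

end

theory Submission
  imports Defs "HOL-Library.FuncSet"
begin

text \<open>
  The proof has three ingredients.

  (1) Invertibility.  A nonnegative transient matrix strictly contracts some weight \<open>w \<ge> 1\<close>.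
  Taking the product of these weights over the bandits, every policy matrix \<open>Q^\<delta>\<close> contracts
  a positive weight by a factor below one, so the Neumann series converges and \<open>I - Q^\<delta>\<close> is
  invertible; the value \<open>V^\<delta>\<close> then satisfies the Bellman equation of \<open>\<delta>\<close>.

  (2) Finalization is Gaussian elimination of \<open>[I - q^k, r^k]\<close> in label order.  Row dominance
  with respect to the weight keeps all pivots positive, the resulting matrix is unit upper
  triangular in label order, and every equation of label below a bound survives elimination.

  (3) The Evaluator keeps the invariant "partial value + potential = \<open>V^\<pi>(\<hat>s)\<close>", where the
  potential is the multilinear form \<open>\<Sum>\<^sub>s \<Prod>\<^sub>p y^p(s_p) V^\<pi>(s)\<close>.  When state \<open>i\<close> of bandit \<open>k\<close> is
  processed, all states of smaller label carry no mass, so on every relevant slice the priority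
  rule plays bandit \<open>k\<close>; the finalized row of \<open>i\<close>, given by (2), then transfers the mass of
  \<open>i\<close> exactly as the Evaluator does.  At the end all mass is gone.
\<close>

section \<open>Matrices over a finite index set\<close>

lemma sum_idm_left: "finite X \<Longrightarrow> s \<in> X \<Longrightarrow> (\<Sum>u\<in>X. idm s u * F u) = F s"
  by (simp add: idm_def if_distrib[where f="\<lambda>x. x * F _"] cong: if_cong)

lemma sum_idm_right: "finite X \<Longrightarrow> t \<in> X \<Longrightarrow> (\<Sum>u\<in>X. F u * idm u t) = F t"
  by (simp add: idm_def if_distrib[where f="\<lambda>x. F _ * x"] cong: if_cong)

lemma mmult_assoc: "mmult X (mmult X A B) C s t = mmult X A (mmult X B C) s t"
proof -
  have "mmult X (mmult X A B) C s t = (\<Sum>u\<in>X. \<Sum>w\<in>X. A s w * B w u * C u t)"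
    unfolding mmult_def by (simp add: sum_distrib_right)
  also have "\<dots> = (\<Sum>w\<in>X. \<Sum>u\<in>X. A s w * B w u * C u t)" by (rule sum.swap)
  also have "\<dots> = mmult X A (mmult X B C) s t"
    unfolding mmult_def by (simp add: sum_distrib_left mult.assoc)
  finally show ?thesis .
qed

lemma mpow_Suc_left:
  assumes "finite X" "s \<in> X" "t \<in> X"
  shows "mmult X A (mpow X A n) s t = mpow X A (Suc n) s t"
  using assms(3)
proof (induction n arbitrary: t)
  case 0
  then show ?case using assms by (simp add: mmult_def sum_idm_left sum_idm_right)
next
  case (Suc n)
  have "mmult X A (mpow X A (Suc n)) s t = (\<Sum>u\<in>X. mmult X A (mpow X A n) s u * A u t)"
    by (simp only: mpow.simps mmult_assoc[symmetric] mmult_def[of X "mmult X A (mpow X A n)"])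
  also have "\<dots> = (\<Sum>u\<in>X. mpow X A (Suc n) s u * A u t)"
    using Suc.IH by (intro sum.cong refl) simp
  finally show ?case by (simp add: mmult_def)
qed

lemma mpow_nonneg:
  assumes "\<forall>s\<in>X. \<forall>t\<in>X. 0 \<le> A s t" "s \<in> X" "t \<in> X"
  shows "0 \<le> mpow X A n s t"
  using assms(3)
proof (induction n arbitrary: t)
  case 0 then show ?case by (simp add: idm_def)
next
  case (Suc n) then show ?case using assms
    by (auto simp: mmult_def intro!: sum_nonneg mult_nonneg_nonneg)
qed

lemma mpow_weight_bound:
  assumes fin: "finite X" and nn: "\<forall>s\<in>X. \<forall>t\<in>X. 0 \<le> A s t"
    and Av: "\<forall>s\<in>X. (\<Sum>t\<in>X. A s t * v t) \<le> \<rho> * v s" and rho: "0 \<le> \<rho>"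
    and s: "s \<in> X"
  shows "(\<Sum>t\<in>X. mpow X A n s t * v t) \<le> \<rho> ^ n * v s"
proof (induction n)
  case 0 then show ?case using fin s by (simp add: sum_idm_left)
next
  case (Suc n)
  have "(\<Sum>t\<in>X. mpow X A (Suc n) s t * v t) = (\<Sum>t\<in>X. \<Sum>u\<in>X. mpow X A n s u * A u t * v t)"
    by (simp add: mmult_def sum_distrib_right)
  also have "\<dots> = (\<Sum>u\<in>X. \<Sum>t\<in>X. mpow X A n s u * A u t * v t)" by (rule sum.swap)
  also have "\<dots> = (\<Sum>u\<in>X. mpow X A n s u * (\<Sum>t\<in>X. A u t * v t))"
    by (simp add: sum_distrib_left mult.assoc)
  also have "\<dots> \<le> (\<Sum>u\<in>X. mpow X A n s u * (\<rho> * v u))"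
    using Av mpow_nonneg[OF nn s] by (intro sum_mono mult_left_mono) auto
  also have "\<dots> = \<rho> * (\<Sum>u\<in>X. mpow X A n s u * v u)"
    by (simp add: sum_distrib_left algebra_simps)
  also have "\<dots> \<le> \<rho> * (\<rho> ^ n * v s)" using Suc rho by (rule mult_left_mono)
  finally show ?case by simp
qed

lemma mpow_summable:
  assumes fin: "finite X" and nn: "\<forall>s\<in>X. \<forall>t\<in>X. 0 \<le> A s t"
    and vpos: "\<forall>s\<in>X. 0 < v s"
    and Av: "\<forall>s\<in>X. (\<Sum>t\<in>X. A s t * v t) \<le> \<rho> * v s" and rho: "0 \<le> \<rho>" "\<rho> < 1"
    and s: "s \<in> X" and t: "t \<in> X"
  shows "summable (\<lambda>n. mpow X A n s t)"
proof (rule summable_comparison_test)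
  have "mpow X A n s t \<le> \<rho> ^ n * (v s / v t)" for n
  proof -
    have "mpow X A n s t * v t \<le> (\<Sum>t\<in>X. mpow X A n s t * v t)"
      using fin t mpow_nonneg[OF nn s] vpos
      by (intro member_le_sum) (auto intro!: mult_nonneg_nonneg simp: less_imp_le)
    also have "\<dots> \<le> \<rho> ^ n * v s" by (rule mpow_weight_bound[OF fin nn Av rho(1) s])
    finally show ?thesis using vpos t by (simp add: field_simps)
  qed
  then show "\<exists>N. \<forall>n\<ge>N. norm (mpow X A n s t) \<le> \<rho> ^ n * (v s / v t)"
    using mpow_nonneg[OF nn s t] by auto
  show "summable (\<lambda>n. \<rho> ^ n * (v s / v t))"
    using rho by (intro summable_mult2 summable_geometric) auto
qed

lemma neumann_series_inverse:
  assumes fin: "finite X" and sm: "\<And>s t. s \<in> X \<Longrightarrow> t \<in> X \<Longrightarrow> summable (\<lambda>n. mpow X A n s t)"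
  shows "is_minverse X (\<lambda>u w. idm u w - A u w) (\<lambda>s t. \<Sum>n. mpow X A n s t)"
proof -
  define B where "B = (\<lambda>s t. \<Sum>n. mpow X A n s t)"
  have B_shift: "B s t = (\<Sum>n. mpow X A (Suc n) s t) + idm s t" if "s \<in> X" "t \<in> X" for s t
    using suminf_split_head[OF sm[OF that]] unfolding B_def by simp
  have left: "mmult X B (\<lambda>u w. idm u w - A u w) s t = idm s t" if st: "s \<in> X" "t \<in> X" for s t
  proof -
    have "mmult X B (\<lambda>u w. idm u w - A u w) s t = B s t - (\<Sum>u\<in>X. B s u * A u t)"
      unfolding mmult_def using fin st by (simp add: right_diff_distrib sum_subtractf sum_idm_right)
    also have "(\<Sum>u\<in>X. B s u * A u t) = (\<Sum>u\<in>X. \<Sum>n. mpow X A n s u * A u t)"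
      unfolding B_def using sm st by (intro sum.cong refl suminf_mult2) auto
    also have "\<dots> = (\<Sum>n. \<Sum>u\<in>X. mpow X A n s u * A u t)"
      using sm st by (intro suminf_sum[symmetric] summable_mult2) auto
    also have "\<dots> = (\<Sum>n. mpow X A (Suc n) s t)" by (simp only: mpow.simps mmult_def)
    finally show ?thesis using B_shift[OF st] by simp
  qed
  have right: "mmult X (\<lambda>u w. idm u w - A u w) B s t = idm s t" if st: "s \<in> X" "t \<in> X" for s t
  proof -
    have "mmult X (\<lambda>u w. idm u w - A u w) B s t = B s t - (\<Sum>u\<in>X. A s u * B u t)"
      unfolding mmult_def using fin st by (simp add: left_diff_distrib sum_subtractf sum_idm_left)
    also have "(\<Sum>u\<in>X. A s u * B u t) = (\<Sum>u\<in>X. \<Sum>n. A s u * mpow X A n u t)"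
      unfolding B_def using sm st by (intro sum.cong refl suminf_mult[symmetric]) auto
    also have "\<dots> = (\<Sum>n. \<Sum>u\<in>X. A s u * mpow X A n u t)"
      using sm st by (intro suminf_sum[symmetric] summable_mult) auto
    also have "\<dots> = (\<Sum>n. mpow X A (Suc n) s t)"
      using mpow_Suc_left[OF fin st, of A] by (simp only: mmult_def)
    finally show ?thesis using B_shift[OF st] by simp
  qed
  show ?thesis using left right unfolding is_minverse_def B_def by auto
qed

section \<open>Weight functions for transient matrices\<close>

lemma mpow_row_sum_Suc:
  assumes fin: "finite X" and j: "j \<in> X"
  shows "(\<Sum>l\<in>X. q j l * (\<Sum>m\<in>X. mpow X q n l m)) = (\<Sum>m\<in>X. mpow X q (Suc n) j m)"
proof -
  have "(\<Sum>l\<in>X. q j l * (\<Sum>m\<in>X. mpow X q n l m)) = (\<Sum>l\<in>X. \<Sum>m\<in>X. q j l * mpow X q n l m)"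
    by (simp add: sum_distrib_left)
  also have "\<dots> = (\<Sum>m\<in>X. \<Sum>l\<in>X. q j l * mpow X q n l m)" by (rule sum.swap)
  also have "\<dots> = (\<Sum>m\<in>X. mpow X q (Suc n) j m)"
    using mpow_Suc_left[OF fin j, of _ q n] by (intro sum.cong refl) (simp add: mmult_def)
  finally show ?thesis .
qed

text \<open>Take \<open>w\<close> to be the row sums of \<open>I + q + \<dots> + q^(N-1)\<close>, where every
  entry of \<open>q^N\<close> is below \<open>1/(2 |X|)\<close>; then \<open>q w = w - 1 + (row sums of q^N)\<close>.\<close>

lemma transient_weight:
  assumes fin: "finite X" and ne: "X \<noteq> {}" and nn: "\<forall>i\<in>X. \<forall>j\<in>X. 0 \<le> q i j"
    and tr: "transient X q"
  shows "\<exists>w. (\<forall>j\<in>X. 1 \<le> w j) \<and> (\<forall>j\<in>X. (\<Sum>l\<in>X. q j l * w l) \<le> w j - 1/2)"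
proof -
  define eps where "eps = 1 / (2 * real (card X))"
  have cpos: "card X > 0" using fin ne by (simp add: card_gt_0_iff)
  have "eps > 0" unfolding eps_def using cpos by simp
  then have "\<forall>\<^sub>F n in sequentially. \<forall>i\<in>X. \<forall>j\<in>X. mpow X q n i j < eps"
    using tr fin unfolding transient_def
    by (intro eventually_ball_finite ballI) (auto dest: order_tendstoD(2))
  then obtain N0 where "\<forall>n\<ge>N0. \<forall>i\<in>X. \<forall>j\<in>X. mpow X q n i j < eps"
    by (auto simp: eventually_sequentially)
  \<comment> \<open>\<open>N\<close> is taken positive so that \<open>w\<close> contains the term \<open>R j 0 = 1\<close>.\<close>
  then obtain N where small: "\<forall>i\<in>X. \<forall>j\<in>X. mpow X q N i j < eps" and "N > 0"
    using le_SucI zero_less_Suc by blast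
  define R where "R j n = (\<Sum>m\<in>X. mpow X q n j m)" for j n
  define w where "w j = (\<Sum>n<N. R j n)" for j
  have R0: "R j 0 = 1" if "j \<in> X" for j
    unfolding R_def using sum_idm_left[OF fin that, of "\<lambda>_. 1"] by simp
  have RN: "R j N \<le> 1/2" if "j \<in> X" for j
  proof -
    have "R j N \<le> (\<Sum>m\<in>X. eps)" unfolding R_def using small that by (intro sum_mono) (auto simp: less_imp_le)
    also have "\<dots> = 1/2" unfolding eps_def using cpos by simp
    finally show ?thesis .
  qed
  have telescope: "(\<Sum>l\<in>X. q j l * w l) = w j + R j N - R j 0" if j: "j \<in> X" for j
  proof -
    have "(\<Sum>l\<in>X. q j l * w l) = (\<Sum>l\<in>X. \<Sum>n<N. q j l * R l n)"
      unfolding w_def by (simp add: sum_distrib_left)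
    also have "\<dots> = (\<Sum>n<N. \<Sum>l\<in>X. q j l * R l n)" by (rule sum.swap)
    also have "\<dots> = (\<Sum>n<N. R j (Suc n))"
      unfolding R_def using mpow_row_sum_Suc[OF fin j] by simp
    also have "\<dots> = w j + R j N - R j 0"
      unfolding w_def using sum.lessThan_Suc_shift[of "R j" N] by simp
    finally show ?thesis .
  qed
  have "1 \<le> w j" if j: "j \<in> X" for j
  proof -
    obtain N' where N': "N = Suc N'" using \<open>N > 0\<close> gr0_implies_Suc by blast
    have "0 \<le> (\<Sum>n<N'. R j (Suc n))"
      unfolding R_def using mpow_nonneg[OF nn j] by (intro sum_nonneg) (simp del: mpow.simps)
    then show ?thesis
      unfolding w_def N' using sum.lessThan_Suc_shift[of "R j" N'] R0[OF j] by simp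
  qed
  moreover have "(\<Sum>l\<in>X. q j l * w l) \<le> w j - 1/2" if "j \<in> X" for j
    using telescope[OF that] R0[OF that] RN[OF that] by simp
  ultimately show ?thesis by blast
qed

section \<open>Finalization as Gaussian elimination in label order\<close>

text \<open>The tableau \<open>[A, c]\<close> stands for the linear system \<open>A f = c\<close>.\<close>

lemma pivot_fst_eq:
  "fst (pivot M i (A, c)) j l =
     (if j = i then A i l / A i i
      else if j \<in> M - {i} then A j l - A j i * (A i l / A i i) else A j l)"
  by (simp add: pivot_def Let_def curq_def idm_def)

lemma pivot_snd_eq:
  "snd (pivot M i (A, c)) j =
     (if j = i then c i / A i i
      else if j \<in> M - {i} then c j - A j i * (c i / A i i) else c j)"
  by (simp add: pivot_def Let_def curq_def idm_def)

lemma finloop_fst_indep: "fst (finloop L n M (A, c)) = fst (finloop L n M (A, c'))"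
proof (induction n arbitrary: M A c c')
  case 0 then show ?case by simp
next
  case (Suc n)
  define i where "i = (ARG_MIN (\<lambda>i. L (Some i)) i. i \<in> M)"
  have tab: "pivot M i (A, c) = (fst (pivot M i (A, c)), snd (pivot M i (A, c)))" by simp
  have "fst (pivot M i (A, c')) = fst (pivot M i (A, c))"
    by (intro ext) (simp only: pivot_fst_eq)
  then have tab': "pivot M i (A, c') = (fst (pivot M i (A, c)), snd (pivot M i (A, c')))"
    by (metis prod.collapse)
  show ?case unfolding finloop.simps Let_def i_def[symmetric]
    by (subst tab, subst tab', rule Suc.IH)
qed

definition first_label :: "('a option \<Rightarrow> nat) \<Rightarrow> 'a set \<Rightarrow> 'a" where
  "first_label L M = (ARG_MIN (\<lambda>i. L (Some i)) i. i \<in> M)"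

lemma first_label_mem: "M \<noteq> {} \<Longrightarrow> first_label L M \<in> M"
  using arg_min_nat_lemma[of "\<lambda>i. i \<in> M" _ "\<lambda>i. L (Some i)"] unfolding first_label_def by blast

lemma first_label_min: "j \<in> M \<Longrightarrow> L (Some (first_label L M)) \<le> L (Some j)"
  using arg_min_nat_le[of "\<lambda>i. i \<in> M" j "\<lambda>i. L (Some i)"] unfolding first_label_def by blast

lemma finloop_induct:
  assumes "finite M" "Inv M T"
    and step: "\<And>M T. finite M \<Longrightarrow> M \<noteq> {} \<Longrightarrow> Inv M T
       \<Longrightarrow> Inv (M - {first_label L M}) (pivot M (first_label L M) T)"
  shows "Inv {} (finloop L (card M) M T)"
  using assms(1,2)
proof (induction "card M" arbitrary: M T)
  case 0 then show ?case by simp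
next
  case (Suc n)
  define i where "i = first_label L M"
  have ne: "M \<noteq> {}" using Suc.hyps(2) by auto
  have card: "n = card (M - {i})" using Suc.hyps(2) Suc.prems(1) first_label_mem[OF ne]
    unfolding i_def by simp
  have "Inv {} (finloop L n (M - {i}) (pivot M i T))"
    using Suc.hyps(1)[OF card] Suc.prems step[OF _ ne] unfolding i_def card by simp
  then show ?case
    unfolding Suc.hyps(2)[symmetric] finloop.simps Let_def i_def first_label_def .
qed

lemma pivot_row_eq:
  assumes piv: "j \<in> M \<Longrightarrow> (\<Sum>l\<in>X. A i l * f l) = c i"
    and row: "(\<Sum>l\<in>X. A j l * f l) = c j"
  shows "(\<Sum>l\<in>X. fst (pivot M i (A, c)) j l * f l) = snd (pivot M i (A, c)) j"
proof -
  consider "j = i" | "j \<in> M - {i}" | "j \<notin> M" "j \<noteq> i" by blast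
  then show ?thesis
  proof cases
    case 1
    then show ?thesis using row
      by (simp add: pivot_fst_eq pivot_snd_eq sum_divide_distrib[symmetric])
  next
    case 2
    have "(\<Sum>l\<in>X. fst (pivot M i (A, c)) j l * f l)
        = (\<Sum>l\<in>X. A j l * f l) - A j i / A i i * (\<Sum>l\<in>X. A i l * f l)"
      using 2 by (simp add: pivot_fst_eq algebra_simps sum_subtractf sum_distrib_left)
    then show ?thesis using 2 piv row by (simp add: pivot_snd_eq)
  next
    case 3
    then show ?thesis using row by (simp add: pivot_fst_eq pivot_snd_eq)
  qed
qed

text \<open>Equations of the system whose label is below a bound \<open>m\<close> survive the whole elimination:
  whenever such a row is touched, the pivot row has an even smaller label.\<close>

lemma finloop_rows:
  assumes fin: "finite X"
    and rows: "\<And>j. j \<in> X \<Longrightarrow> L (Some j) < m \<Longrightarrow> (\<Sum>l\<in>X. A j l * f l) = c j"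
    and j: "j \<in> X" "L (Some j) < m"
  shows "(\<Sum>l\<in>X. fst (finloop L (card X) X (A, c)) j l * f l) = snd (finloop L (card X) X (A, c)) j"
proof -
  define Inv where "Inv M T \<longleftrightarrow> M \<subseteq> X \<and>
      (\<forall>j\<in>X. L (Some j) < m \<longrightarrow> (\<Sum>l\<in>X. fst T j l * f l) = snd T j)" for M T
  have "Inv {} (finloop L (card X) X (A, c))"
  proof (rule finloop_induct[OF fin])
    show "Inv X (A, c)" unfolding Inv_def using rows by auto
    fix M and T :: "('a \<Rightarrow> 'a \<Rightarrow> real) \<times> ('a \<Rightarrow> real)"
    assume ne: "M \<noteq> {}" and inv: "Inv M T"
    define i where "i = first_label L M"
    have "(\<Sum>l\<in>X. fst (pivot M i T) j l * f l) = snd (pivot M i T) j"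
      if "j \<in> X" "L (Some j) < m" for j
    proof -
      have "L (Some i) < m" if "j \<in> M"
        using first_label_min[OF that, where L=L] \<open>L (Some j) < m\<close> unfolding i_def by simp
      moreover have "i \<in> X" using first_label_mem[OF ne] inv unfolding Inv_def i_def by blast
      ultimately show ?thesis
        using inv that pivot_row_eq[where A="fst T" and c="snd T"] unfolding Inv_def by simp
    qed
    then show "Inv (M - {first_label L M}) (pivot M (first_label L M) T)"
      using inv unfolding Inv_def i_def by auto
  qed
  then show ?thesis using j unfolding Inv_def by blast
qed

locale label_elimination =
  fixes X :: "'a set" and L :: "'a option \<Rightarrow> nat"
  assumes finX: "finite X"
    and L_inj: "\<And>x y. x \<in> X \<Longrightarrow> y \<in> X \<Longrightarrow> L (Some x) = L (Some y) \<Longrightarrow> x = y"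
begin

lemma first_label_less:
  assumes "M \<subseteq> X" "j \<in> M - {first_label L M}"
  shows "L (Some (first_label L M)) < L (Some j)"
proof -
  have ne: "M \<noteq> {}" and j: "j \<in> M" "j \<noteq> first_label L M" using assms(2) by auto
  have "L (Some (first_label L M)) \<noteq> L (Some j)"
    using L_inj[of "first_label L M" j] first_label_mem[OF ne] j assms(1) by auto
  then show ?thesis using first_label_min[OF j(1), where L=L] by simp
qed

definition label_tail :: "'a set \<Rightarrow> bool" where
  "label_tail M \<longleftrightarrow> M \<subseteq> X \<and> (\<forall>l\<in>X - M. \<forall>j\<in>M. L (Some l) < L (Some j))"

lemma label_tail_step:
  assumes "label_tail M" "M \<noteq> {}"
  shows "label_tail (M - {first_label L M})"
proof -
  have MX: "M \<subseteq> X" and ord: "\<And>l j. l \<in> X - M \<Longrightarrow> j \<in> M \<Longrightarrow> L (Some l) < L (Some j)"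
    using assms(1) unfolding label_tail_def by auto
  have "L (Some l) < L (Some j)" if "l \<in> X - (M - {first_label L M})" "j \<in> M - {first_label L M}" for l j
  proof (cases "l = first_label L M")
    case True then show ?thesis using first_label_less[OF MX that(2)] by simp
  next
    case False then show ?thesis using ord[of l j] that by simp
  qed
  then show ?thesis using MX unfolding label_tail_def by blast
qed

text \<open>Row dominance with respect to a positive weight \<open>w\<close>: \<open>A w = c > 0\<close>, and the active rows
  have nonpositive off-diagonal entries.  It keeps every pivot positive.\<close>

definition dominant :: "('a \<Rightarrow> real) \<Rightarrow> 'a set \<Rightarrow> ('a \<Rightarrow> 'a \<Rightarrow> real) \<times> ('a \<Rightarrow> real) \<Rightarrow> bool" where
  "dominant w M T \<longleftrightarrow>
     (\<forall>j\<in>X. (\<Sum>l\<in>X. fst T j l * w l) = snd T j \<and> snd T j > 0) \<and>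
     (\<forall>j\<in>M. \<forall>l\<in>X. l \<noteq> j \<longrightarrow> fst T j l \<le> 0)"

lemma dominant_pivot_pos:
  assumes wpos: "\<forall>l\<in>X. 0 < w l" and dom: "dominant w M (A, c)" and i: "i \<in> M" "i \<in> X"
  shows "A i i > 0"
proof -
  have "A i l * w l \<le> 0" if "l \<in> X - {i}" for l
    using dom i wpos that unfolding dominant_def by (intro mult_nonpos_nonneg) auto
  then have "(\<Sum>l\<in>X - {i}. A i l * w l) \<le> 0" by (rule sum_nonpos)
  moreover have "(\<Sum>l\<in>X. A i l * w l) = A i i * w i + (\<Sum>l\<in>X - {i}. A i l * w l)"
    using i finX by (simp add: sum.remove)
  moreover have "(\<Sum>l\<in>X. A i l * w l) > 0" using dom i unfolding dominant_def by simp
  ultimately have "A i i * w i > 0" by linarith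
  moreover have "w i > 0" using wpos i by blast
  ultimately show ?thesis by (simp add: zero_less_mult_iff)
qed

lemma dominant_step:
  assumes wpos: "\<forall>l\<in>X. 0 < w l" and dom: "dominant w M (A, c)" and i: "i \<in> M" and MX: "M \<subseteq> X"
  shows "dominant w (M - {i}) (pivot M i (A, c))"
proof -
  have Aii: "A i i > 0" using dominant_pivot_pos[OF wpos dom i] i MX by auto
  have row: "\<And>j. j \<in> X \<Longrightarrow> (\<Sum>l\<in>X. A j l * w l) = c j" and cpos: "\<And>j. j \<in> X \<Longrightarrow> c j > 0"
    and off: "\<And>j l. j \<in> M \<Longrightarrow> l \<in> X \<Longrightarrow> l \<noteq> j \<Longrightarrow> A j l \<le> 0"
    using dom unfolding dominant_def by auto
  have "snd (pivot M i (A, c)) j > 0" if "j \<in> X" for j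
  proof -
    have "A j i * (c i / A i i) \<le> 0" if "j \<in> M - {i}"
      using off[of j i] that i MX Aii cpos[of i] by (intro mult_nonpos_nonneg) auto
    then show ?thesis using cpos[OF that] cpos[of i] i MX Aii by (auto simp: pivot_snd_eq)
  qed
  moreover have "fst (pivot M i (A, c)) j l \<le> 0" if "j \<in> M - {i}" "l \<in> X" "l \<noteq> j" for j l
  proof (cases "l = i")
    case True then show ?thesis using that Aii by (simp add: pivot_fst_eq)
  next
    case False
    have "A i l / A i i \<le> 0" using off[of i l] that i False Aii by (intro divide_nonpos_pos) auto
    then have "0 \<le> A j i * (A i l / A i i)"
      using off[of j i] that i MX by (intro mult_nonpos_nonpos) auto
    then show ?thesis using off[of j l] that by (simp add: pivot_fst_eq)
  qed
  moreover have "(\<Sum>l\<in>X. fst (pivot M i (A, c)) j l * w l) = snd (pivot M i (A, c)) j"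
    if "j \<in> X" for j
    using row[OF that] row[of i] i MX by (intro pivot_row_eq) auto
  ultimately show ?thesis unfolding dominant_def by auto
qed

definition reduced :: "'a set \<Rightarrow> ('a \<Rightarrow> 'a \<Rightarrow> real) \<Rightarrow> bool" where
  "reduced M A \<longleftrightarrow>
     (\<forall>j\<in>X. \<forall>l\<in>X - M. l \<noteq> j \<and> (j \<in> M \<or> L (Some l) < L (Some j)) \<longrightarrow> A j l = 0) \<and>
     (\<forall>j\<in>X - M. A j j = 1)"

lemma reduced_step:
  assumes tail: "label_tail M" and ne: "M \<noteq> {}" and red: "reduced M A"
    and piv: "A (first_label L M) (first_label L M) \<noteq> 0"
  shows "reduced (M - {first_label L M}) (fst (pivot M (first_label L M) (A, c)))"
proof -
  define i where "i = first_label L M"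
  have iM: "i \<in> M" unfolding i_def using first_label_mem[OF ne] .
  have MX: "M \<subseteq> X" and ord: "\<And>l j. l \<in> X - M \<Longrightarrow> j \<in> M \<Longrightarrow> L (Some l) < L (Some j)"
    using tail unfolding label_tail_def by auto
  have zero: "\<And>j l. j \<in> X \<Longrightarrow> l \<in> X - M \<Longrightarrow> l \<noteq> j \<Longrightarrow> j \<in> M \<or> L (Some l) < L (Some j) \<Longrightarrow> A j l = 0"
    and diag: "\<And>j. j \<in> X - M \<Longrightarrow> A j j = 1"
    using red unfolding reduced_def by auto
  have "fst (pivot M i (A, c)) j l = 0"
    if j: "j \<in> X" and l: "l \<in> X - (M - {i})" "l \<noteq> j"
      and jl: "j \<in> M - {i} \<or> L (Some l) < L (Some j)" for j l
  proof -
    consider "l = i" "j \<in> M - {i}" | "l = i" "j \<notin> M" | "l \<in> X - M"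
      using l j jl by blast
    then show ?thesis
    proof cases
      case 1 then show ?thesis using piv by (simp add: pivot_fst_eq i_def)
    next
      case 2
      then have "L (Some i) < L (Some j)" using jl by simp
      moreover have "L (Some j) < L (Some i)" using ord[of j i] 2 iM j by simp
      ultimately show ?thesis by simp
    next
      case 3
      have "A i l = 0" using zero[of i l] iM MX 3 by blast
      moreover have "A j l = 0" if "j \<notin> M - {i}"
        using zero[OF j 3 l(2)] jl that by blast
      moreover have "A j l = 0" if "j \<in> M - {i}"
        using zero[OF j 3 l(2)] that by blast
      ultimately show ?thesis by (auto simp: pivot_fst_eq)
    qed
  qed
  moreover have "fst (pivot M i (A, c)) j j = 1" if "j \<in> X - (M - {i})" for j
  proof (cases "j = i")
    case True then show ?thesis using piv by (simp add: pivot_fst_eq i_def)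
  next
    case False then show ?thesis using that diag[of j] by (simp add: pivot_fst_eq)
  qed
  ultimately show ?thesis unfolding reduced_def i_def by blast
qed

lemma finloop_unit_triangular:
  fixes q :: "'a \<Rightarrow> 'a \<Rightarrow> real" and c :: "'a \<Rightarrow> real"
  assumes wpos: "\<forall>l\<in>X. 0 < w l" and qnn: "\<forall>j\<in>X. \<forall>l\<in>X. 0 \<le> q j l"
    and contr: "\<forall>j\<in>X. (\<Sum>l\<in>X. q j l * w l) < w j"
  defines "A \<equiv> fst (finloop L (card X) X ((\<lambda>i j. idm i j - q i j), c))"
  shows "\<And>j. j \<in> X \<Longrightarrow> A j j = 1"
    and "\<And>j l. j \<in> X \<Longrightarrow> l \<in> X \<Longrightarrow> l \<noteq> j \<Longrightarrow> L (Some l) < L (Some j) \<Longrightarrow> A j l = 0"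
proof -
  define A0 where "A0 = (\<lambda>i j. idm i j - q i j)"
  define c0 where "c0 j = (\<Sum>l\<in>X. A0 j l * w l)" for j
  define Inv where "Inv M T \<longleftrightarrow> label_tail M \<and> dominant w M T \<and> reduced M (fst T)" for M T
  have "c0 j > 0" if "j \<in> X" for j
    using contr that sum_idm_left[OF finX that, of w]
    unfolding c0_def A0_def by (simp add: left_diff_distrib sum_subtractf)
  then have "Inv X (A0, c0)"
    using qnn unfolding Inv_def label_tail_def dominant_def reduced_def c0_def A0_def
    by (auto simp: idm_def)
  then have "Inv {} (finloop L (card X) X (A0, c0))"
  proof (rule finloop_induct[OF finX])
    fix M and T :: "('a \<Rightarrow> 'a \<Rightarrow> real) \<times> ('a \<Rightarrow> real)"
    assume ne: "M \<noteq> {}" and inv: "Inv M T"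
    have MX: "M \<subseteq> X" and iM: "first_label L M \<in> M"
      using inv first_label_mem[OF ne] unfolding Inv_def label_tail_def by auto
    have dom: "dominant w M (fst T, snd T)" using inv unfolding Inv_def by simp
    have "fst T (first_label L M) (first_label L M) > 0"
      using dominant_pivot_pos[OF wpos dom iM] iM MX by blast
    then show "Inv (M - {first_label L M}) (pivot M (first_label L M) T)"
      using inv label_tail_step[OF _ ne] dominant_step[OF wpos dom iM MX]
        reduced_step[OF _ ne, of "fst T" "snd T"]
      unfolding Inv_def by simp
  qed
  moreover have "fst (finloop L (card X) X (A0, c0)) = A"
    unfolding A_def A0_def by (rule finloop_fst_indep)
  ultimately have "reduced {} A" unfolding Inv_def by simp
  then show "\<And>j. j \<in> X \<Longrightarrow> A j j = 1"
    and "\<And>j l. j \<in> X \<Longrightarrow> l \<in> X \<Longrightarrow> l \<noteq> j \<Longrightarrow> L (Some l) < L (Some j) \<Longrightarrow> A j l = 0"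
    unfolding reduced_def by auto
qed

end

section \<open>Multi-states\<close>

text \<open>A multi-state is determined by its vector of components \<open>(s_1, \<dots>, s_K)\<close>; we pass freely
  between the two views via the extensional function space \<open>PiE I N\<close>.\<close>

locale bandits =
  fixes K :: nat and N :: "nat \<Rightarrow> 'a set"
  assumes K: "K \<ge> 1"
    and fin: "\<forall>k\<in>{1..K}. finite (N k) \<and> N k \<noteq> {}"
    and disj: "\<forall>k\<in>{1..K}. \<forall>l\<in>{1..K}. k \<noteq> l \<longrightarrow> N k \<inter> N l = {}"
begin

abbreviation "I \<equiv> {1..K}"
abbreviation "S \<equiv> multistates K N"

lemma finN: "k \<in> I \<Longrightarrow> finite (N k)"
  using fin by auto

lemma disjD: "k \<in> I \<Longrightarrow> l \<in> I \<Longrightarrow> x \<in> N k \<Longrightarrow> x \<in> N l \<Longrightarrow> k = l"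
  using disj by blast

lemma Nall_iff: "x \<in> Nall K N \<longleftrightarrow> (\<exists>k\<in>I. x \<in> N k)"
  unfolding Nall_def by auto

lemma finNall: "finite (Nall K N)"
  unfolding Nall_def using fin by auto

lemma bidx_eq: "k \<in> I \<Longrightarrow> j \<in> N k \<Longrightarrow> bidx K N j = k"
  unfolding bidx_def using disjD by (intro the_equality) auto

lemma finS: "finite S"
proof -
  have "S \<subseteq> Pow (Nall K N)" unfolding multistates_def by auto
  then show ?thesis using finNall by (meson finite_Pow_iff finite_subset)
qed

lemma comp_eq:
  assumes "s \<in> S" "k \<in> I" "x \<in> s" "x \<in> N k"
  shows "comp N s k = x"
proof -
  have "\<exists>!x. x \<in> s \<and> x \<in> N k" using assms(1,2) unfolding multistates_def by blast
  then show ?thesis unfolding comp_def by (rule the1_equality) (use assms(3,4) in blast)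
qed

lemma comp_mem:
  assumes "s \<in> S" "k \<in> I"
  shows "comp N s k \<in> s" "comp N s k \<in> N k"
proof -
  have "\<exists>x. x \<in> s \<and> x \<in> N k" using assms unfolding multistates_def by blast
  then obtain x where "x \<in> s" "x \<in> N k" by blast
  then show "comp N s k \<in> s" "comp N s k \<in> N k" using comp_eq[OF assms] by simp_all
qed

definition coords :: "'a set \<Rightarrow> nat \<Rightarrow> 'a" where
  "coords s = restrict (comp N s) I"

lemma coords_PiE: "s \<in> S \<Longrightarrow> coords s \<in> PiE I N"
  unfolding coords_def using comp_mem by simp

lemma coords_image:
  assumes s: "s \<in> S"
  shows "coords s ` I = s"
proof
  show "coords s ` I \<subseteq> s" using comp_mem[OF s] unfolding coords_def by auto
  show "s \<subseteq> coords s ` I"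
  proof
    fix x assume x: "x \<in> s"
    then have "x \<in> Nall K N" using s unfolding multistates_def by blast
    then obtain k where k: "k \<in> I" "x \<in> N k" unfolding Nall_iff by blast
    then have "x = coords s k" using comp_eq[OF s k(1) x k(2)] unfolding coords_def by simp
    then show "x \<in> coords s ` I" using k(1) by blast
  qed
qed

lemma coords_inj:
  assumes s: "s \<in> S"
  shows "inj_on (coords s) I"
proof (rule inj_onI)
  fix p p' assume p: "p \<in> I" "p' \<in> I" and eq: "coords s p = coords s p'"
  then have "comp N s p \<in> N p'" using comp_mem(2)[OF s p(2)] unfolding coords_def by simp
  then show "p = p'" using disjD[OF p] comp_mem(2)[OF s p(1)] by blast
qed

lemma image_S: "g \<in> PiE I N \<Longrightarrow> g ` I \<in> S"
proof -
  assume g: "g \<in> PiE I N"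
  have "\<exists>!x. x \<in> g ` I \<and> x \<in> N k" if k: "k \<in> I" for k
  proof (rule ex1I[of _ "g k"])
    show "g k \<in> g ` I \<and> g k \<in> N k" using PiE_mem[OF g k] k by blast
    fix y assume y: "y \<in> g ` I \<and> y \<in> N k"
    then obtain p where p: "p \<in> I" "y = g p" by blast
    then have "p = k" using disjD[OF p(1) k] PiE_mem[OF g p(1)] y by simp
    then show "y = g k" using p by simp
  qed
  moreover have "g ` I \<subseteq> Nall K N" unfolding Nall_def using PiE_mem[OF g] by blast
  ultimately show ?thesis unfolding multistates_def by blast
qed

lemma comp_image:
  assumes g: "g \<in> PiE I N" and p: "p \<in> I"
  shows "comp N (g ` I) p = g p"
  using comp_eq[OF image_S[OF g] p _ PiE_mem[OF g p]] p by blast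

lemma insert_comp_eq:
  assumes s: "s \<in> S" and k: "k \<in> I" and j: "j \<in> N k"
  shows "insert j (s - {comp N s k}) = (coords s)(k := j) ` I"
proof -
  have "s - {comp N s k} = coords s ` I - coords s ` {k}"
    using coords_image[OF s] k unfolding coords_def by simp
  also have "\<dots> = coords s ` (I - {k})"
    using coords_inj[OF s] k by (simp add: inj_on_image_set_diff)
  finally show ?thesis unfolding fun_upd_image if_P[OF k] by simp
qed

lemma PiE_upd: "g \<in> PiE I N \<Longrightarrow> k \<in> I \<Longrightarrow> j \<in> N k \<Longrightarrow> g(k := j) \<in> PiE I N"
  unfolding PiE_def Pi_def extensional_def by auto

lemma insert_comp_image:
  assumes g: "g \<in> PiE I N" and k: "k \<in> I" and j: "j \<in> N k"
  shows "insert j (g ` I - {comp N (g ` I) k}) = g(k := j) ` I"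
proof -
  have "coords (g ` I) p = g p" if "p \<in> I" for p
    using comp_image[OF g that] that unfolding coords_def by simp
  then have "(coords (g ` I))(k := j) ` I = g(k := j) ` I" by (intro image_cong) auto
  then show ?thesis using insert_comp_eq[OF image_S[OF g] k j] by simp
qed

lemma Qpol_sum:
  assumes s: "s \<in> S" and k: "\<delta> s = k" "k \<in> I"
  shows "(\<Sum>t\<in>S. Qpol N q \<delta> s t * F t)
       = (\<Sum>j\<in>N k. q (comp N s k) j * F (insert j (s - {comp N s k})))"
proof -
  define i where "i = comp N s k"
  define up where "up j = insert j (s - {i})" for j
  have up_eq: "up j = (coords s)(k := j) ` I" if "j \<in> N k" for j
    unfolding up_def i_def using insert_comp_eq[OF s k(2) that] .
  have up_S: "up j \<in> S" and comp_up: "comp N (up j) k = j" if "j \<in> N k" for j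
  proof -
    have g: "(coords s)(k := j) \<in> PiE I N" using PiE_upd[OF coords_PiE[OF s] k(2) that] .
    show "up j \<in> S" unfolding up_eq[OF that] using image_S[OF g] .
    show "comp N (up j) k = j" unfolding up_eq[OF that] using comp_image[OF g k(2)] by (simp only: fun_upd_same)
  qed
  have inj: "inj_on up (N k)"
  proof (rule inj_onI)
    fix x y assume x: "x \<in> N k" and y: "y \<in> N k" and "up x = up y"
    then have "comp N (up x) k = comp N (up y) k" by simp
    then show "x = y" unfolding comp_up[OF x] comp_up[OF y] .
  qed
  have Q_eq: "Qpol N q \<delta> s t = (if \<exists>j\<in>N k. t = up j then q i (THE j. j \<in> N k \<and> t = up j) else 0)"
    for t unfolding Qpol_def Let_def k(1) i_def[symmetric] up_def ..
  have Q_up: "Qpol N q \<delta> s (up j) = q i j" if "j \<in> N k" for j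
  proof -
    have "(THE j'. j' \<in> N k \<and> up j = up j') = j"
      using that inj by (intro the_equality) (auto dest: inj_onD)
    then show ?thesis using that unfolding Q_eq by auto
  qed
  have "Qpol N q \<delta> s t = 0" if "t \<in> S - up ` N k" for t
    using that unfolding Q_eq by auto
  then have "(\<Sum>t\<in>S. Qpol N q \<delta> s t * F t) = (\<Sum>t\<in>up ` N k. Qpol N q \<delta> s t * F t)"
    using finS up_S by (intro sum.mono_neutral_right) auto
  also have "\<dots> = (\<Sum>j\<in>N k. Qpol N q \<delta> s (up j) * F (up j))"
    using inj by (rule sum.reindex_cong) auto
  also have "\<dots> = (\<Sum>j\<in>N k. q i j * F (up j))"
    using Q_up by (intro sum.cong) auto
  finally show ?thesis unfolding up_def i_def .
qed

lemma sum_PiE_split: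
  assumes k: "k \<in> I"
  shows "(\<Sum>g\<in>PiE I N. G g) = (\<Sum>x\<in>N k. \<Sum>h\<in>PiE (I - {k}) N. G (h(k := x)))"
proof -
  have "PiE I N = (\<lambda>(y, g). g(k := y)) ` (N k \<times> PiE (I - {k}) N)"
    using k PiE_insert_eq[of k "I - {k}" N] by (simp add: insert_absorb)
  moreover have "inj_on (\<lambda>(y, g). g(k := y)) (N k \<times> PiE (I - {k}) N)"
    using inj_combinator[of k "I - {k}" N] by simp
  ultimately have "(\<Sum>g\<in>PiE I N. G g) = (\<Sum>(x, h)\<in>N k \<times> PiE (I - {k}) N. G (h(k := x)))"
    by (simp add: sum.reindex case_prod_unfold)
  then show ?thesis by (simp add: sum.cartesian_product)
qed

end

section \<open>Every policy has a well-defined value\<close>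

locale bandit_model = bandits K N for K :: nat and N :: "nat \<Rightarrow> 'a set" +
  fixes q :: "'a \<Rightarrow> 'a \<Rightarrow> real"
  assumes q_nonneg: "\<forall>k\<in>{1..K}. \<forall>i\<in>N k. \<forall>j\<in>N k. 0 \<le> q i j"
    and q_transient: "\<forall>k\<in>{1..K}. transient (N k) q"
begin

lemma bandit_weight:
  "\<exists>w. \<forall>k\<in>I. \<forall>j\<in>N k. 1 \<le> w j \<and> (\<Sum>l\<in>N k. q j l * w l) \<le> w j - 1/2"
proof -
  have "\<exists>w. \<forall>j\<in>N k. 1 \<le> w j \<and> (\<Sum>l\<in>N k. q j l * w l) \<le> w j - 1/2" if k: "k \<in> I" for k
    using transient_weight[of "N k" q] fin q_nonneg q_transient k by auto
  then obtain W where W: "\<And>k j. k \<in> I \<Longrightarrow> j \<in> N k \<Longrightarrow>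
      1 \<le> W k j \<and> (\<Sum>l\<in>N k. q j l * W k l) \<le> W k j - 1/2"
    by metis
  have "1 \<le> W (bidx K N j) j \<and> (\<Sum>l\<in>N k. q j l * W (bidx K N l) l) \<le> W (bidx K N j) j - 1/2"
    if "k \<in> I" "j \<in> N k" for k j
    using W[OF that] bidx_eq[OF that] bidx_eq[OF that(1)] by simp
  then show ?thesis by (intro exI[of _ "\<lambda>j. W (bidx K N j) j"]) blast
qed

lemma Qpol_nonneg:
  assumes s: "s \<in> S" and t: "t \<in> S" and \<delta>: "\<delta> s \<in> I"
  shows "0 \<le> Qpol N q \<delta> s t"
proof -
  define i where "i = comp N s (\<delta> s)"
  have "Qpol N q \<delta> s t = (\<Sum>u\<in>S. Qpol N q \<delta> s u * idm u t)"
    using sum_idm_right[OF finS t] by simp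
  also have "\<dots> = (\<Sum>j\<in>N (\<delta> s). q i j * idm (insert j (s - {i})) t)"
    unfolding i_def by (rule Qpol_sum[of s \<delta> "\<delta> s" q, OF s refl \<delta>])
  also have "\<dots> \<ge> 0"
    using q_nonneg \<delta> comp_mem(2)[OF s \<delta>] unfolding i_def
    by (intro sum_nonneg mult_nonneg_nonneg) (auto simp: idm_def)
  finally show ?thesis .
qed

text \<open>The product weight \<open>v(s) = \<Prod>p. w(s_p)\<close> is contracted by \<open>Q^\<delta>\<close> by a factor
  \<open>1 - 1/(2W)\<close>, where \<open>W\<close> bounds \<open>w\<close>: only the played coordinate changes.\<close>

lemma Qpol_product_contraction:
  assumes w: "\<forall>k\<in>I. \<forall>j\<in>N k. 1 \<le> w j \<and> (\<Sum>l\<in>N k. q j l * w l) \<le> w j - 1/2"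
    and W: "\<forall>k\<in>I. \<forall>j\<in>N k. w j \<le> W" and s: "s \<in> S" and \<delta>: "\<delta> s \<in> I"
  shows "(\<Sum>t\<in>S. Qpol N q \<delta> s t * (\<Prod>p\<in>I. w (comp N t p)))
       \<le> (1 - 1 / (2 * W)) * (\<Prod>p\<in>I. w (comp N s p))"
proof -
  define k where "k = \<delta> s"
  define i where "i = comp N s k"
  define P where "P = (\<Prod>p\<in>I - {k}. w (comp N s p))"
  have k: "k \<in> I" and i: "i \<in> N k" using \<delta> comp_mem[OF s] unfolding k_def i_def by auto
  have P1: "1 \<le> P" unfolding P_def using w comp_mem(2)[OF s] by (intro prod_ge_1) blast
  have W1: "1 \<le> W" using w W k i by fastforce
  have split: "(\<Prod>p\<in>I. w (g p)) = w (g k) * (\<Prod>p\<in>I - {k}. w (g p))" for g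
    using k by (simp add: prod.remove)
  have moved: "(\<Prod>p\<in>I. w (comp N (insert j (s - {i})) p)) = w j * P" if j: "j \<in> N k" for j
  proof -
    have g: "(coords s)(k := j) \<in> PiE I N" using PiE_upd[OF coords_PiE[OF s] k j] .
    have "(\<Prod>p\<in>I. w (comp N (insert j (s - {i})) p)) = (\<Prod>p\<in>I. w (((coords s)(k := j)) p))"
      unfolding i_def insert_comp_eq[OF s k j] using comp_image[OF g] by simp
    then show ?thesis unfolding split P_def by (simp add: coords_def)
  qed
  have "(\<Sum>t\<in>S. Qpol N q \<delta> s t * (\<Prod>p\<in>I. w (comp N t p)))
      = (\<Sum>j\<in>N k. q i j * (\<Prod>p\<in>I. w (comp N (insert j (s - {i})) p)))"
    unfolding i_def using Qpol_sum[of s \<delta> k q, OF s k_def[symmetric] k] .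
  also have "\<dots> = (\<Sum>j\<in>N k. q i j * w j) * P"
    using moved by (simp add: sum_distrib_right mult.assoc)
  also have "\<dots> \<le> (w i - 1/2) * P" using w k i P1 by (intro mult_right_mono) auto
  also have "\<dots> \<le> (1 - 1 / (2 * W)) * (w i * P)"
    using W k i W1 P1 by (simp add: field_simps mult_right_mono)
  also have "w i * P = (\<Prod>p\<in>I. w (comp N s p))" unfolding P_def i_def split ..
  finally show ?thesis .
qed

lemma Qpol_inverse:
  assumes \<delta>: "\<forall>s\<in>S. \<delta> s \<in> I"
  shows "is_minverse S (\<lambda>u v. idm u v - Qpol N q \<delta> u v) (\<lambda>s t. \<Sum>n. mpow S (Qpol N q \<delta>) n s t)"
proof (rule neumann_series_inverse[OF finS])
  obtain w where w: "\<forall>k\<in>I. \<forall>j\<in>N k. 1 \<le> w j \<and> (\<Sum>l\<in>N k. q j l * w l) \<le> w j - 1/2"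
    using bandit_weight by blast
  define W where "W = Max (w ` Nall K N)"
  have W: "\<forall>k\<in>I. \<forall>j\<in>N k. w j \<le> W"
  proof (intro ballI)
    fix k j assume "k \<in> I" "j \<in> N k"
    then have "j \<in> Nall K N" unfolding Nall_def by blast
    then show "w j \<le> W" unfolding W_def using finNall by (intro Max_ge) auto
  qed
  have W1: "1 \<le> W" using w W K fin by fastforce
  define v where "v s = (\<Prod>p\<in>I. w (comp N s p))" for s
  define \<rho> where "\<rho> = 1 - 1 / (2 * W)"
  show "summable (\<lambda>n. mpow S (Qpol N q \<delta>) n s t)" if "s \<in> S" "t \<in> S" for s t
  proof (rule mpow_summable[OF finS _ _ _ _ _ that, where v=v and \<rho>=\<rho>])
    show "\<forall>s\<in>S. \<forall>t\<in>S. 0 \<le> Qpol N q \<delta> s t" using Qpol_nonneg \<delta> by blast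
    show "\<forall>s\<in>S. 0 < v s"
      unfolding v_def using w comp_mem(2) by (intro ballI prod_pos) fastforce
    show "\<forall>s\<in>S. (\<Sum>t\<in>S. Qpol N q \<delta> s t * v t) \<le> \<rho> * v s"
      unfolding v_def \<rho>_def using Qpol_product_contraction[OF w W] \<delta> by blast
    show "0 \<le> \<rho>" "\<rho> < 1" unfolding \<rho>_def using W1 by (simp_all add: field_simps)
  qed
qed

lemma Vpol_bellman:
  assumes \<delta>: "\<forall>s\<in>S. \<delta> s \<in> I" and s: "s \<in> S"
  shows "Vpol K N q r \<delta> s = r (comp N s (\<delta> s)) +
    (\<Sum>j\<in>N (\<delta> s). q (comp N s (\<delta> s)) j * Vpol K N q r \<delta> (insert j (s - {comp N s (\<delta> s)})))"
proof -
  let ?V = "Vpol K N q r \<delta>" and ?R = "Rpol N r \<delta>" and ?Q = "Qpol N q \<delta>"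
  define B where "B = minv S (\<lambda>u v. idm u v - ?Q u v)"
  have B: "is_minverse S (\<lambda>u v. idm u v - ?Q u v) B"
    unfolding B_def minv_def
    by (rule someI[of "is_minverse S (\<lambda>u v. idm u v - ?Q u v)", OF Qpol_inverse[OF \<delta>]])
  have V: "?V t = (\<Sum>u\<in>S. B t u * ?R u)" for t unfolding Vpol_def B_def ..
  have "?V s - (\<Sum>t\<in>S. ?Q s t * ?V t) = (\<Sum>t\<in>S. (idm s t - ?Q s t) * ?V t)"
    using sum_idm_left[OF finS s, of ?V] by (simp add: left_diff_distrib sum_subtractf)
  also have "\<dots> = (\<Sum>t\<in>S. \<Sum>u\<in>S. (idm s t - ?Q s t) * B t u * ?R u)"
    unfolding V by (simp add: sum_distrib_left mult.assoc)
  also have "\<dots> = (\<Sum>u\<in>S. \<Sum>t\<in>S. (idm s t - ?Q s t) * B t u * ?R u)"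
    by (rule sum.swap)
  also have "\<dots> = (\<Sum>u\<in>S. mmult S (\<lambda>u v. idm u v - ?Q u v) B s u * ?R u)"
    unfolding mmult_def by (simp add: sum_distrib_right)
  also have "\<dots> = (\<Sum>u\<in>S. idm s u * ?R u)"
    using B s unfolding is_minverse_def by (intro sum.cong) auto
  also have "\<dots> = ?R s" using sum_idm_left[OF finS s] .
  finally show ?thesis
    using Qpol_sum[of s \<delta> "\<delta> s" q ?V, OF s refl] \<delta> s unfolding Rpol_def by simp
qed

end

section \<open>Labels, the priority rule and the finalized data\<close>

locale labelled_bandits = bandit_model K N q for K :: nat and N :: "nat \<Rightarrow> 'a set" and q +
  fixes r :: "'a \<Rightarrow> real" and L :: "'a option \<Rightarrow> nat"
  assumes lab: "labeling K N L"
begin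

abbreviation "prio \<equiv> priority K N L"
abbreviation "qt \<equiv> qtil K N q r L"
abbreviation "rt \<equiv> rtil K N q r L"

lemma L_inj: "x \<in> Nall K N \<Longrightarrow> y \<in> Nall K N \<Longrightarrow> L (Some x) = L (Some y) \<Longrightarrow> x = y"
  using lab unfolding labeling_def inj_on_def by blast

lemma label_range: "j \<in> Nall K N \<Longrightarrow> L (Some j) \<in> {1..card (Nall K N)}"
proof -
  assume j: "j \<in> Nall K N"
  have "L (Some j) \<noteq> L None"
    using lab j unfolding labeling_def inj_on_def by blast
  then show ?thesis using lab j unfolding labeling_def by force
qed

lemma label_state:
  assumes n: "n \<in> {1..card (Nall K N)}"
  defines "i \<equiv> THE i. i \<in> Nall K N \<and> L (Some i) = n"
  shows "i \<in> Nall K N" "L (Some i) = n"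
proof -
  have "(\<lambda>x. L (Some x)) ` Nall K N = {1..card (Nall K N)}"
  proof (rule card_subset_eq)
    show "(\<lambda>x. L (Some x)) ` Nall K N \<subseteq> {1..card (Nall K N)}" using label_range by blast
    show "card ((\<lambda>x. L (Some x)) ` Nall K N) = card {1..card (Nall K N)}"
      using L_inj by (simp add: card_image inj_on_def)
  qed simp
  then have "n \<in> (\<lambda>x. L (Some x)) ` Nall K N" using n by simp
  then obtain x where x: "x \<in> Nall K N" "L (Some x) = n" by blast
  have "i = x" unfolding i_def using x L_inj by (intro the_equality) auto
  then show "i \<in> Nall K N" "L (Some i) = n" using x by auto
qed

lemma priority_mem: "s \<in> S \<Longrightarrow> prio s \<in> I"
  unfolding priority_def using K arg_min_nat_lemma[of "\<lambda>k. k \<in> I" 1] by simp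

lemma priority_eqI:
  assumes s: "s \<in> S" and k: "k \<in> I"
    and less: "\<And>p. p \<in> I \<Longrightarrow> p \<noteq> k \<Longrightarrow> L (Some (comp N s k)) < L (Some (comp N s p))"
  shows "prio s = k"
proof (rule ccontr)
  assume ne: "prio s \<noteq> k"
  have "L (Some (comp N s (prio s))) \<le> L (Some (comp N s k))"
    unfolding priority_def using arg_min_nat_le[of "\<lambda>k. k \<in> I" k] k by simp
  then show False using less[OF priority_mem[OF s] ne] by simp
qed

lemma fin_tab_triangular:
  assumes k: "k \<in> I"
  shows "\<And>j. j \<in> N k \<Longrightarrow> fst (fin_tab N q r L k) j j = 1"
    and "\<And>j l. j \<in> N k \<Longrightarrow> l \<in> N k \<Longrightarrow> l \<noteq> j \<Longrightarrow> L (Some l) < L (Some j)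
           \<Longrightarrow> fst (fin_tab N q r L k) j l = 0"
proof -
  interpret label_elimination "N k" L
  proof
    show "finite (N k)" using finN[OF k] .
    show "x = y" if "x \<in> N k" "y \<in> N k" "L (Some x) = L (Some y)" for x y
      using L_inj[of x y] that k unfolding Nall_def by blast
  qed
  obtain w where w: "\<forall>j\<in>N k. 1 \<le> w j" "\<forall>j\<in>N k. (\<Sum>l\<in>N k. q j l * w l) \<le> w j - 1/2"
    using transient_weight[of "N k" q] fin q_nonneg q_transient k by auto
  have "\<forall>l\<in>N k. 0 < w l" "\<forall>j\<in>N k. \<forall>l\<in>N k. 0 \<le> q j l"
    "\<forall>j\<in>N k. (\<Sum>l\<in>N k. q j l * w l) < w j"
    using w q_nonneg k by fastforce+
  note tri = finloop_unit_triangular[where c=r, OF this]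
  show "\<And>j. j \<in> N k \<Longrightarrow> fst (fin_tab N q r L k) j j = 1"
    and "\<And>j l. j \<in> N k \<Longrightarrow> l \<in> N k \<Longrightarrow> l \<noteq> j \<Longrightarrow> L (Some l) < L (Some j)
           \<Longrightarrow> fst (fin_tab N q r L k) j l = 0"
    unfolding fin_tab_def using tri by blast+
qed

lemma qtil_lower:
  assumes "k \<in> I" "i \<in> N k" "j \<in> N k" "j \<noteq> i" "L (Some j) < L (Some i)"
  shows "qt i j = 0"
  using fin_tab_triangular(2)[OF assms(1,2,3,4,5)] assms bidx_eq
  unfolding qtil_def curq_def idm_def by simp

lemma finalized_row:
  assumes k: "k \<in> I" and i: "i \<in> N k" and im: "L (Some i) < m"
    and rows: "\<And>j. j \<in> N k \<Longrightarrow> L (Some j) < m \<Longrightarrow> (\<Sum>l\<in>N k. (idm j l - q j l) * f l) = r j"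
  shows "f i = rt i + (\<Sum>l\<in>N k - {i}. qt i l * f l)"
proof -
  define A where "A = fst (fin_tab N q r L k)"
  have "(\<Sum>l\<in>N k. A i l * f l) = rt i"
    using finloop_rows[where X="N k" and L=L and m=m and f=f and A="\<lambda>j l. idm j l - q j l" and c=r, OF finN[OF k] rows i im]
      bidx_eq[OF k i]
    unfolding A_def fin_tab_def rtil_def by simp
  moreover have "(\<Sum>l\<in>N k. A i l * f l) = A i i * f i + (\<Sum>l\<in>N k - {i}. A i l * f l)"
    using i finN[OF k] by (simp add: sum.remove)
  moreover have "A i i = 1" using fin_tab_triangular(1)[OF k i] unfolding A_def .
  moreover have "qt i l = - A i l" if "l \<noteq> i" for l
    using that bidx_eq[OF k i] unfolding qtil_def curq_def idm_def A_def by simp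
  ultimately show ?thesis by (simp add: sum_negf)
qed

end

section \<open>Correctness of the Evaluator\<close>

lemma sum_transfer:
  fixes f y a :: "'a \<Rightarrow> real"
  assumes fin: "finite X" and i: "i \<in> X" and fi: "f i = \<rho> + (\<Sum>l\<in>X - {i}. a l * f l)"
  shows "(\<Sum>x\<in>X. y x * f x) = y i * \<rho> +
    (\<Sum>x\<in>X. (if x \<in> X - {i} then y x + y i * a x else if x = i then 0 else y x) * f x)"
proof -
  have "(\<Sum>x\<in>X. (if x \<in> X - {i} then y x + y i * a x else if x = i then 0 else y x) * f x)
      = (\<Sum>x\<in>X - {i}. (y x + y i * a x) * f x)"
    using fin i by (simp add: sum.remove)
  also have "\<dots> = (\<Sum>x\<in>X - {i}. y x * f x) + y i * (\<Sum>l\<in>X - {i}. a l * f l)"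
    by (simp add: algebra_simps sum.distrib sum_distrib_left)
  finally show ?thesis using fin i fi by (simp add: sum.remove algebra_simps)
qed

context labelled_bandits
begin

abbreviation "V \<equiv> Vpol K N q r prio"

text \<open>The Evaluator maintains vectors \<open>y^p\<close> and a partial value; the remaining value is the
  multilinear form below, summing \<open>V^\<pi>\<close> over all multi-states with product weights.\<close>

definition potential :: "('a \<Rightarrow> real) \<Rightarrow> real" where
  "potential y = (\<Sum>g\<in>PiE I N. (\<Prod>p\<in>I. y (g p)) * V (g ` I))"

lemma potential_split:
  assumes k: "k \<in> I"
  shows "potential y = (\<Sum>h\<in>PiE (I - {k}) N.
           (\<Prod>p\<in>I - {k}. y (h p)) * (\<Sum>x\<in>N k. y x * V (h(k := x) ` I)))"
proof -
  have prod: "(\<Prod>p\<in>I. y ((h(k := x)) p)) = y x * (\<Prod>p\<in>I - {k}. y (h p))" for h x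
  proof -
    have "(\<Prod>p\<in>I. y ((h(k := x)) p)) = y x * (\<Prod>p\<in>I - {k}. y ((h(k := x)) p))"
      using k by (simp add: prod.remove)
    also have "(\<Prod>p\<in>I - {k}. y ((h(k := x)) p)) = (\<Prod>p\<in>I - {k}. y (h p))"
      by (intro prod.cong) auto
    finally show ?thesis .
  qed
  have "potential y = (\<Sum>x\<in>N k. \<Sum>h\<in>PiE (I - {k}) N. y x * (\<Prod>p\<in>I - {k}. y (h p)) * V (h(k := x) ` I))"
    unfolding potential_def sum_PiE_split[OF k] prod ..
  also have "\<dots> = (\<Sum>h\<in>PiE (I - {k}) N. \<Sum>x\<in>N k. y x * (\<Prod>p\<in>I - {k}. y (h p)) * V (h(k := x) ` I))"
    by (rule sum.swap)
  finally show ?thesis by (simp add: sum_distrib_left mult_ac)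
qed

text \<open>Fix the states \<open>h\<close> of all bandits but \<open>k\<close>.  While bandit \<open>k\<close> sits at a state \<open>j\<close> whose
  label is below all labels of \<open>h\<close>, the priority rule plays bandit \<open>k\<close>, so the value, seen as
  a function of the state of bandit \<open>k\<close>, obeys the single-bandit equation at \<open>j\<close>.\<close>

lemma slice_bellman:
  assumes k: "k \<in> I" and h: "h \<in> PiE (I - {k}) N" and j: "j \<in> N k"
    and below: "\<And>p. p \<in> I - {k} \<Longrightarrow> L (Some j) < L (Some (h p))"
  shows "(\<Sum>l\<in>N k. (idm j l - q j l) * V (h(k := l) ` I)) = r j"
proof -
  define g where "g = h(k := j)"
  have g: "g \<in> PiE I N" unfolding g_def using PiE_fun_upd[OF j h] k by (simp add: insert_absorb)
  have comp_g: "comp N (g ` I) p = g p" if "p \<in> I" for p using comp_image[OF g that] .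
  have "prio (g ` I) = k"
    using priority_eqI[OF image_S[OF g] k] below comp_g k unfolding g_def by simp
  then have "V (g ` I) = r j + (\<Sum>l\<in>N k. q j l * V (insert l (g ` I - {comp N (g ` I) k})))"
    using Vpol_bellman[OF _ image_S[OF g]] priority_mem comp_g[OF k] unfolding g_def by simp
  also have "\<dots> = r j + (\<Sum>l\<in>N k. q j l * V (h(k := l) ` I))"
    using insert_comp_image[OF g k] unfolding g_def by simp
  finally have "V (h(k := j) ` I) = r j + (\<Sum>l\<in>N k. q j l * V (h(k := l) ` I))"
    unfolding g_def .
  then show ?thesis
    using sum_idm_left[OF finN[OF k] j, of "\<lambda>l. V (h(k := l) ` I)"]
    by (simp add: left_diff_distrib sum_subtractf)
qed

lemma slice_transfer:
  assumes k: "k \<in> I" and i: "i \<in> N k" and h: "h \<in> PiE (I - {k}) N"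
    and above: "\<And>p. p \<in> I - {k} \<Longrightarrow> L (Some i) < L (Some (h p))"
  shows "(\<Sum>x\<in>N k. y x * V (h(k := x) ` I)) = y i * rt i +
    (\<Sum>x\<in>N k. (if x \<in> N k - {i} then y x + y i * qt i x else if x = i then 0 else y x)
               * V (h(k := x) ` I))"
proof (rule sum_transfer[OF finN[OF k] i])
  show "V (h(k := i) ` I) = rt i + (\<Sum>l\<in>N k - {i}. qt i l * V (h(k := l) ` I))"
  proof (rule finalized_row[OF k i, of "Suc (L (Some i))"])
    fix j assume "j \<in> N k" "L (Some j) < Suc (L (Some i))"
    then show "(\<Sum>l\<in>N k. (idm j l - q j l) * V (h(k := l) ` I)) = r j"
      using above by (intro slice_bellman[OF k h]) force+
  qed simp
qed

text \<open>All states of label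
  below that of \<open>i\<close> already carry zero mass, so only slices with \<open>h\<close> above \<open>i\<close> contribute.\<close>

lemma potential_step:
  assumes k: "k \<in> I" and i: "i \<in> N k"
    and low: "\<And>j. j \<in> Nall K N \<Longrightarrow> L (Some j) < L (Some i) \<Longrightarrow> y j = 0"
  defines "y' \<equiv> \<lambda>j. if j \<in> N k - {i} then y j + y i * qt i j else if j = i then 0 else y j"
  shows "potential y = y i * rt i * (\<Prod>p\<in>I - {k}. \<Sum>j\<in>N p. y j) + potential y'"
proof -
  define W where "W h x = V (h(k := x) ` I)" for h x
  have other: "h p \<in> Nall K N - N k" if "h \<in> PiE (I - {k}) N" "p \<in> I - {k}" for h p
    using PiE_mem[OF that] disjD[of p k] k that(2) unfolding Nall_def by blast
  have y'_other: "(\<Prod>p\<in>I - {k}. y' (h p)) = (\<Prod>p\<in>I - {k}. y (h p))" if h: "h \<in> PiE (I - {k}) N" for h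
    using other[OF h] i unfolding y'_def by (intro prod.cong) auto
  have slice: "(\<Prod>p\<in>I - {k}. y (h p)) * (\<Sum>x\<in>N k. y x * W h x)
      = (\<Prod>p\<in>I - {k}. y (h p)) * (y i * rt i) + (\<Prod>p\<in>I - {k}. y' (h p)) * (\<Sum>x\<in>N k. y' x * W h x)"
    if h: "h \<in> PiE (I - {k}) N" for h
  proof (cases "\<exists>p\<in>I - {k}. y (h p) = 0")
    case True
    then have zero: "(\<Prod>p\<in>I - {k}. y (h p)) = 0" by (intro prod_zero) auto
    show ?thesis by (simp only: y'_other[OF h] zero mult_zero_left add_0_left)
  next
    case False
    have "L (Some i) < L (Some (h p))" if p: "p \<in> I - {k}" for p
    proof -
      have "h p \<noteq> i" "h p \<in> Nall K N" using other[OF h p] i by auto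
      moreover have "i \<in> Nall K N" using i k unfolding Nall_def by blast
      ultimately show ?thesis using low[of "h p"] L_inj False p by (meson linorder_neqE_nat)
    qed
    then show ?thesis
      using slice_transfer[OF k i h, of y] y'_other[OF h] unfolding W_def y'_def
      by (simp add: algebra_simps)
  qed
  have "potential y = (\<Sum>h\<in>PiE (I - {k}) N. (\<Prod>p\<in>I - {k}. y (h p)) * (y i * rt i) +
      (\<Prod>p\<in>I - {k}. y' (h p)) * (\<Sum>x\<in>N k. y' x * W h x))"
    unfolding potential_split[OF k, of y] W_def[symmetric] using slice by (rule sum.cong[OF refl])
  also have "\<dots> = y i * rt i * (\<Sum>h\<in>PiE (I - {k}) N. \<Prod>p\<in>I - {k}. y (h p)) + potential y'"
    unfolding potential_split[OF k, of y'] W_def by (simp add: sum.distrib sum_distrib_left mult_ac)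
  also have "(\<Sum>h\<in>PiE (I - {k}) N. \<Prod>p\<in>I - {k}. y (h p)) = (\<Prod>p\<in>I - {k}. \<Sum>j\<in>N p. y j)"
    using finN by (intro prod_sum_PiE[symmetric]) auto
  finally show ?thesis .
qed

definition ev_inv :: "'a set \<Rightarrow> nat \<Rightarrow> real \<times> ('a \<Rightarrow> real) \<Rightarrow> bool" where
  "ev_inv sh n st \<longleftrightarrow> fst st + potential (snd st) = V sh \<and>
     (\<forall>j\<in>Nall K N. L (Some j) < n \<longrightarrow> snd st j = 0)"

lemma ev_inv_step:
  assumes n: "n \<in> {1..card (Nall K N)}" and inv: "ev_inv sh n (v, y)"
  shows "ev_inv sh (Suc n) (evstep K N qt rt L n (v, y))"
proof -
  define i where "i = (THE i. i \<in> Nall K N \<and> L (Some i) = n)"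
  have iN: "i \<in> Nall K N" and Li: "L (Some i) = n" using label_state[OF n] unfolding i_def by auto
  obtain k where k: "k \<in> I" and ik: "i \<in> N k" using iN unfolding Nall_def by blast
  define y' where "y' j = (if j \<in> N k - {i} then y j + y i * qt i j else if j = i then 0 else y j)" for j
  have ev: "evstep K N qt rt L n (v, y) = (v + rt i * y i * (\<Prod>p\<in>I - {k}. \<Sum>j\<in>N p. y j), y')"
    unfolding evstep_def Let_def i_def[symmetric] bidx_eq[OF k ik] y'_def by (simp cong: if_cong)
  have low: "\<And>j. j \<in> Nall K N \<Longrightarrow> L (Some j) < n \<Longrightarrow> y j = 0"
    using inv unfolding ev_inv_def by auto
  have "y' j = 0" if j: "j \<in> Nall K N" "L (Some j) < Suc n" for j
  proof (cases "j = i")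
    case False
    then have jn: "L (Some j) < n" using j L_inj[OF j(1) iN] Li by fastforce
    then show ?thesis using low[OF j(1) jn] qtil_lower[OF k ik] Li False unfolding y'_def by auto
  qed (simp add: y'_def)
  moreover have "potential y = y i * rt i * (\<Prod>p\<in>I - {k}. \<Sum>j\<in>N p. y j) + potential y'"
    unfolding y'_def using potential_step[OF k ik] low Li by simp
  ultimately show ?thesis using inv unfolding ev ev_inv_def by (simp add: algebra_simps)
qed

lemma ev_inv_init:
  assumes sh: "sh \<in> S"
  shows "ev_inv sh 1 (0, \<lambda>j. if j \<in> sh then 1 else 0)"
proof -
  have ind: "(\<Prod>p\<in>I. if g p \<in> sh then 1 else 0) = (if g = coords sh then 1 else (0::real))"
    if g: "g \<in> PiE I N" for g
  proof -
    have "g p \<in> sh \<longleftrightarrow> g p = coords sh p" if "p \<in> I" for p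
      using comp_eq[OF sh that _ PiE_mem[OF g that]] comp_mem[OF sh that] that
      unfolding coords_def by auto
    moreover have "g = coords sh \<longleftrightarrow> (\<forall>p\<in>I. g p = coords sh p)"
      using g coords_PiE[OF sh] by (auto intro: PiE_ext)
    ultimately show ?thesis by (auto simp: prod_zero_iff)
  qed
  have "potential (\<lambda>j. if j \<in> sh then 1 else 0) = (\<Sum>g\<in>PiE I N. (if g = coords sh then 1 else 0) * V (g ` I))"
    unfolding potential_def using ind by (intro sum.cong) auto
  also have "\<dots> = V sh"
    using coords_PiE[OF sh] coords_image[OF sh] finite_PiE[of I N] finN
    by (simp add: if_distrib[of "\<lambda>x. x * _"] sum.delta' cong: if_cong)
  finally show ?thesis using label_range unfolding ev_inv_def by fastforce
qed

lemma ev_inv_final: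
  assumes "ev_inv sh (card (Nall K N) + 1) st"
  shows "fst st = V sh"
proof -
  have zero: "(\<Prod>p\<in>I. snd st (g p)) = 0" if g: "g \<in> PiE I N" for g
  proof -
    have "1 \<in> I" using K by simp
    then have "g 1 \<in> Nall K N" using PiE_mem[OF g] unfolding Nall_def by blast
    then have "snd st (g 1) = 0" using assms label_range unfolding ev_inv_def by fastforce
    then show ?thesis using \<open>1 \<in> I\<close> by (intro prod_zero) auto
  qed
  then have "potential (snd st) = 0"
    unfolding potential_def by (intro sum.neutral ballI) (simp only: zero mult_zero_left)
  then show ?thesis using assms unfolding ev_inv_def by simp
qed

theorem evaluator_correct:
  assumes sh: "sh \<in> S"
  shows "evaluator K N q r L sh = V sh"
proof -
  define run where "run m = fold (evstep K N qt rt L) [1..<m] (0, \<lambda>j. if j \<in> sh then 1 else 0)" for m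
  have "ev_inv sh m (run m)" if "1 \<le> m" "m \<le> card (Nall K N) + 1" for m
    using that
  proof (induction m rule: dec_induct)
    case base then show ?case unfolding run_def using ev_inv_init[OF sh] by simp
  next
    case (step m)
    then have "run (Suc m) = evstep K N qt rt L m (run m)" unfolding run_def by simp
    then show ?case using ev_inv_step[of m sh "fst (run m)" "snd (run m)"] step by simp
  qed
  then have "ev_inv sh (card (Nall K N) + 1) (run (card (Nall K N) + 1))" by simp
  then show ?thesis unfolding evaluator_def run_def[symmetric] by (rule ev_inv_final)
qed

end

theorem proposition4p2:
  fixes K :: nat and N :: "nat \<Rightarrow> 'a set" and q :: "'a \<Rightarrow> 'a \<Rightarrow> real"
    and r :: "'a \<Rightarrow> real" and L :: "'a option \<Rightarrow> nat" and shat :: "'a set"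
  assumes K: "K \<ge> 1"
    and fin: "\<forall>k\<in>{1..K}. finite (N k) \<and> N k \<noteq> {}"
    and disj: "\<forall>k\<in>{1..K}. \<forall>l\<in>{1..K}. k \<noteq> l \<longrightarrow> N k \<inter> N l = {}"
    and C: "hypC K N q r"
    and shat: "shat \<in> multistates K N"
    and lab: "labeling K N L"
  shows "minvertible (multistates K N) (\<lambda>u v. idm u v - Qpol N q (priority K N L) u v)
       \<and> evaluator K N q r L shat = Vpol K N q r (priority K N L) shat"
proof -
  interpret labelled_bandits K N q r L
    using K fin disj C lab unfolding hypC_def by unfold_locales blast+
  have "minvertible S (\<lambda>u v. idm u v - Qpol N q prio u v)"
    unfolding minvertible_def using Qpol_inverse priority_mem by blast
  then show ?thesis using evaluator_correct[OF shat] by simp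
qed

end
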